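(* Let $\mathcal D_{red}$ be a reduced datum of finite Cartan type and $l=(l_i)$ a family of nonzero scalars, and let $E_i=y_i$, $F_i=x_iL_i^{-1}$ in $U(\mathcal D_{red},l)$. For each connected component $J$ of the Dynkin diagram of $(a_{ij})$ choose $d_i\in\{1,2,3\}$ ($i\in J$) and $q_J\in k$ with $q_{ii}=q_J^{2d_i}$ and $d_ia_{ij}=d_ja_{ji}$ for $i,j\in J$, and set $p_{ij}=q_{ij}q_J^{-d_ia_{ij}}$ if $i,j\in J$, $p_{ij}=q_{ij}$ if $i,j$ are in different components. Then the defining relations of $U(\mathcal D_{red},l)$ are equivalent, in $U(\mathcal D_{red},l)$, to: for all $i\ne j$ with $i\in J$, $$\sum_{s=0}^{1-a_{ij}}(-p_{ij})^s\begin{bmatrix}1-a_{ij}\\ s\end{bmatrix}_{q_J^{d_i}}E_i^{1-a_{ij}-s}E_jE_i^s=0,\qquad \sum_{s=0}^{1-a_{ij}}(-p_{ij}^{-1})^s\begin{bmatrix}1-a_{ij}\\ s\end{bmatrix}_{q_J^{d_i}}F_i^{1-a_{ij}-s}F_jF_i^s=0,$$ and for all $i,j$: $E_iF_j-F_jE_i=\delta_{ij}q_{ii}^{-1}l_i(K_i-L_i^{-1})$. Moreover, $gE_ig^{-1}=\chi_i(g)E_i$, $gF_ig^{-1}=\chi_i^{-1}(g)F_i$ for $g\in\Gamma$, and $\Delta(E_i)=K_i\otimes E_i+E_i\otimes1$, $\Delta(F_i)=1\otimes F_i+F_i\otimes L_i^{-1}$.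
   Context: $k$ is an algebraically closed field of characteristic zero; $\widehat\Gamma$ is the character group of the abelian group $\Gamma$. A reduced datum of finite Cartan type $\mathcal D_{red}=\mathcal D_{red}(\Gamma,(L_i)_{1\le i\le n},(K_i)_{1\le i\le n},(\chi_i)_{1\le i\le n},(a_{ij}))$ consists of $n\ge1$, $L_i,K_i\in\Gamma$, $\chi_i\in\widehat\Gamma$, a Cartan matrix $(a_{ij})$ of finite type with $\chi_i(K_j)\chi_j(K_i)=\chi_i(K_i)^{a_{ij}}$, $\chi_i(L_j)=\chi_j(K_i)$, $K_iL_i\ne1$, $\chi_i(K_i)\ne1$. $q_{ij}=\chi_j(K_i)$. $U(\mathcal D_{red},l)$ is the quotient Hopf algebra of the smash product $k\langle x_1,\dots,x_n,y_1,\dots,y_n\rangle\#k[\Gamma]$, where $gx_ig^{-1}=\chi_i^{-1}(g)x_i$, $gy_ig^{-1}=\chi_i(g)y_i$, $\Delta(x_i)=L_i\otimes x_i+x_i\otimes1$, $\Delta(y_i)=K_i\otimes y_i+y_i\otimes1$, $\Delta(g)=g\otimes g$, by the ideal generated by $\operatorname{ad}_c(x_i)^{1-a_{ij}}(x_j)$, $\operatorname{ad}_c(y_i)^{1-a_{ij}}(y_j)$ ($i\ne j$) and $x_iy_j-\chi_j(L_i)y_jx_i-\delta_{ij}l_i(1-K_iL_i)$, with $\operatorname{ad}_c(x_i)(w)=x_iw-(L_iwL_i^{-1})x_i$, $\operatorname{ad}_c(y_i)(w)=y_iw-(K_iwK_i^{-1})y_i$. Gaussian binomials: with $[n]=\frac{v^n-v^{-n}}{v-v^{-1}}$,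 $[n]^!=[1]\cdots[n]$, $\begin{bmatrix}n\\ i\end{bmatrix}=\frac{[n]^!}{[i]^![n-i]^!}$, and $\begin{bmatrix}n\\ i\end{bmatrix}_q$ its specialization $v\mapsto q$. *)

theory Defs
  imports "HOL-Computational_Algebra.Polynomial"
begin

definition alg_closed :: "'k::field itself \<Rightarrow> bool" where
  "alg_closed _ \<longleftrightarrow> (\<forall>p::'k poly. degree p > 0 \<longrightarrow> (\<exists>z. poly p z = 0))"

text \<open>The abelian group Gamma is written additively (type class ab_group_add):
  the product g h is g + h, the unit is 0, the inverse of g is - g.\<close>

definition is_character :: "('g::ab_group_add \<Rightarrow> 'k::field) \<Rightarrow> bool" where
  "is_character c \<longleftrightarrow> (\<forall>g h. c (g + h) = c g * c h) \<and> c 0 = 1"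

definition gen_cartan :: "nat \<Rightarrow> (nat \<Rightarrow> nat \<Rightarrow> int) \<Rightarrow> bool" where
  "gen_cartan n a \<longleftrightarrow> (\<forall>i<n. a i i = 2) \<and> (\<forall>i<n. \<forall>j<n. i \<noteq> j \<longrightarrow> a i j \<le> 0)
     \<and> (\<forall>i<n. \<forall>j<n. a i j = 0 \<longleftrightarrow> a j i = 0)"

definition cartan_finite_type :: "nat \<Rightarrow> (nat \<Rightarrow> nat \<Rightarrow> int) \<Rightarrow> bool" where
  "cartan_finite_type n a \<longleftrightarrow> gen_cartan n a \<and>
     (\<exists>e::nat \<Rightarrow> real. (\<forall>i<n. e i > 0) \<and> (\<forall>i<n. \<forall>j<n. e i * of_int (a i j) = e j * of_int (a j i))
        \<and> (\<forall>v::nat \<Rightarrow> real. (\<exists>i<n. v i \<noteq> 0) \<longrightarrow>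
              (\<Sum>i<n. \<Sum>j<n. e i * of_int (a i j) * v i * v j) > 0))"

definition dynkin_adj :: "nat \<Rightarrow> (nat \<Rightarrow> nat \<Rightarrow> int) \<Rightarrow> nat \<Rightarrow> nat \<Rightarrow> bool" where
  "dynkin_adj n a i j \<longleftrightarrow> i < n \<and> j < n \<and> i \<noteq> j \<and> a i j \<noteq> 0"

definition same_component :: "nat \<Rightarrow> (nat \<Rightarrow> nat \<Rightarrow> int) \<Rightarrow> nat \<Rightarrow> nat \<Rightarrow> bool" where
  "same_component n a i j \<longleftrightarrow> (dynkin_adj n a)\<^sup>*\<^sup>* i j"

definition reduced_datum ::
  "nat \<Rightarrow> (nat \<Rightarrow> 'g::ab_group_add) \<Rightarrow> (nat \<Rightarrow> 'g) \<Rightarrow> (nat \<Rightarrow> 'g \<Rightarrow> 'k::field)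
     \<Rightarrow> (nat \<Rightarrow> nat \<Rightarrow> int) \<Rightarrow> bool" where
  "reduced_datum n L K \<chi> a \<longleftrightarrow> n \<ge> 1 \<and> cartan_finite_type n a
     \<and> (\<forall>i<n. is_character (\<chi> i))
     \<and> (\<forall>i<n. \<forall>j<n. \<chi> i (K j) * \<chi> j (K i) = \<chi> i (K i) powi (a i j))
     \<and> (\<forall>i<n. \<forall>j<n. \<chi> i (L j) = \<chi> j (K i))
     \<and> (\<forall>i<n. K i + L i \<noteq> 0)
     \<and> (\<forall>i<n. \<chi> i (K i) \<noteq> 1)"

definition qpar :: "(nat \<Rightarrow> 'g) \<Rightarrow> (nat \<Rightarrow> 'g \<Rightarrow> 'k) \<Rightarrow> nat \<Rightarrow> nat \<Rightarrow> 'k" where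
  "qpar K \<chi> i j = \<chi> j (K i)"

text \<open>gauss_binom v m s is the specialisation v := v of the Laurent polynomial
  [m choose s] = [m]!/([s]![m-s]!), [m] = (v^m - v^-m)/(v - v^-1); it is computed by the
  q-Pascal rule [m+1, s+1] = v^(s+1) [m, s+1] + v^(-(m-s)) [m, s], which holds in Z[v,v^-1].\<close>

fun gauss_binom :: "'k::field \<Rightarrow> nat \<Rightarrow> nat \<Rightarrow> 'k" where
  "gauss_binom v 0 s = (if s = 0 then 1 else 0)"
| "gauss_binom v (Suc m) 0 = 1"
| "gauss_binom v (Suc m) (Suc s) =
     v powi (int (Suc s)) * gauss_binom v m (Suc s) + v powi (- (int m - int s)) * gauss_binom v m s"

text \<open>A k-algebra is a ring 'a with a unital ring homomorphism sc : k \<rightarrow> 'a into the centre;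
  scalar multiplication c . z is sc c * z.\<close>

definition k_algebra :: "('k::field \<Rightarrow> 'a::ring_1) \<Rightarrow> bool" where
  "k_algebra sc \<longleftrightarrow> (\<forall>c d. sc (c + d) = sc c + sc d) \<and> (\<forall>c d. sc (c * d) = sc c * sc d)
     \<and> sc 1 = 1 \<and> (\<forall>c z. sc c * z = z * sc c)"

definition k_alg_hom :: "('k::field \<Rightarrow> 'a::ring_1) \<Rightarrow> ('k \<Rightarrow> 'b::ring_1) \<Rightarrow> ('a \<Rightarrow> 'b) \<Rightarrow> bool" where
  "k_alg_hom scA scB f \<longleftrightarrow> (\<forall>u v. f (u + v) = f u + f v) \<and> (\<forall>u v. f (u * v) = f u * f v)
     \<and> f 1 = 1 \<and> (\<forall>c. f (scA c) = scB c)"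

definition group_into :: "('g::ab_group_add \<Rightarrow> 'a::ring_1) \<Rightarrow> bool" where
  "group_into \<gamma> \<longleftrightarrow> (\<forall>g h. \<gamma> (g + h) = \<gamma> g * \<gamma> h) \<and> \<gamma> 0 = 1"

text \<open>Relations of the smash product k<x,y> # k[Gamma] (images of group elements under gamma).\<close>

definition smash_relations ::
  "nat \<Rightarrow> (nat \<Rightarrow> 'g::ab_group_add \<Rightarrow> 'k::field) \<Rightarrow> ('k \<Rightarrow> 'a::ring_1) \<Rightarrow> ('g \<Rightarrow> 'a)
     \<Rightarrow> (nat \<Rightarrow> 'a) \<Rightarrow> (nat \<Rightarrow> 'a) \<Rightarrow> bool" where
  "smash_relations n \<chi> sc \<gamma> x y \<longleftrightarrow> k_algebra sc \<and> group_into \<gamma> \<and>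
     (\<forall>i<n. \<forall>g. \<gamma> g * x i * \<gamma> (- g) = sc (inverse (\<chi> i g)) * x i
              \<and> \<gamma> g * y i * \<gamma> (- g) = sc (\<chi> i g) * y i)"

definition ad_c :: "'a::ring_1 \<Rightarrow> 'a \<Rightarrow> 'a \<Rightarrow> 'a \<Rightarrow> 'a" where
  "ad_c h hinv z w = z * w - h * w * hinv * z"

text \<open>Defining relations of U(D_red, l) (in addition to the smash product relations).\<close>
definition U_relations ::
  "nat \<Rightarrow> (nat \<Rightarrow> 'g::ab_group_add) \<Rightarrow> (nat \<Rightarrow> 'g) \<Rightarrow> (nat \<Rightarrow> 'g \<Rightarrow> 'k::field)
     \<Rightarrow> (nat \<Rightarrow> nat \<Rightarrow> int) \<Rightarrow> (nat \<Rightarrow> 'k) \<Rightarrow> ('k \<Rightarrow> 'a::ring_1) \<Rightarrow> ('g \<Rightarrow> 'a)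
     \<Rightarrow> (nat \<Rightarrow> 'a) \<Rightarrow> (nat \<Rightarrow> 'a) \<Rightarrow> bool" where
  "U_relations n L K \<chi> a l sc \<gamma> x y \<longleftrightarrow>
     (\<forall>i<n. \<forall>j<n. i \<noteq> j \<longrightarrow>
        (ad_c (\<gamma> (L i)) (\<gamma> (- L i)) (x i) ^^ nat (1 - a i j)) (x j) = 0 \<and>
        (ad_c (\<gamma> (K i)) (\<gamma> (- K i)) (y i) ^^ nat (1 - a i j)) (y j) = 0)
   \<and> (\<forall>i<n. \<forall>j<n. x i * y j - sc (\<chi> j (L i)) * y j * x i
                     = (if i = j then sc (l i) * (1 - \<gamma> (K i + L i)) else 0))"

text \<open>The coefficients p_ij; qc i is q_J for the component J containing i.\<close>
definition pcoef ::
  "nat \<Rightarrow> (nat \<Rightarrow> nat \<Rightarrow> int) \<Rightarrow> (nat \<Rightarrow> 'g) \<Rightarrow> (nat \<Rightarrow> 'g \<Rightarrow> 'k::field)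
     \<Rightarrow> (nat \<Rightarrow> nat) \<Rightarrow> (nat \<Rightarrow> 'k) \<Rightarrow> nat \<Rightarrow> nat \<Rightarrow> 'k" where
  "pcoef n a K \<chi> d qc i j =
     (if same_component n a i j then qpar K \<chi> i j * qc i powi (- (int (d i) * a i j))
      else qpar K \<chi> i j)"

text \<open>The new presentation, with E i = y i and F i = x i * L_i^-1.\<close>
definition new_relations ::
  "nat \<Rightarrow> (nat \<Rightarrow> 'g::ab_group_add) \<Rightarrow> (nat \<Rightarrow> 'g) \<Rightarrow> (nat \<Rightarrow> 'g \<Rightarrow> 'k::field)
     \<Rightarrow> (nat \<Rightarrow> nat \<Rightarrow> int) \<Rightarrow> (nat \<Rightarrow> 'k) \<Rightarrow> (nat \<Rightarrow> nat) \<Rightarrow> (nat \<Rightarrow> 'k)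
     \<Rightarrow> ('k \<Rightarrow> 'a::ring_1) \<Rightarrow> ('g \<Rightarrow> 'a) \<Rightarrow> (nat \<Rightarrow> 'a) \<Rightarrow> (nat \<Rightarrow> 'a) \<Rightarrow> bool" where
  "new_relations n L K \<chi> a l d qc sc \<gamma> E F \<longleftrightarrow>
     (\<forall>i<n. \<forall>j<n. i \<noteq> j \<longrightarrow>
        (\<Sum>s = 0..nat (1 - a i j).
            sc ((- pcoef n a K \<chi> d qc i j) ^ s * gauss_binom (qc i ^ d i) (nat (1 - a i j)) s)
              * E i ^ (nat (1 - a i j) - s) * E j * E i ^ s) = 0 \<and>
        (\<Sum>s = 0..nat (1 - a i j).
            sc ((- inverse (pcoef n a K \<chi> d qc i j)) ^ s * gauss_binom (qc i ^ d i) (nat (1 - a i j)) s)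
              * F i ^ (nat (1 - a i j) - s) * F j * F i ^ s) = 0)
   \<and> (\<forall>i<n. \<forall>j<n. E i * F j - F j * E i
         = (if i = j then sc (inverse (qpar K \<chi> i i) * l i) * (\<gamma> (K i) - \<gamma> (- L i)) else 0))"

end

theory Submission
  imports Defs
begin

(* If h z = v^2 z h, z h' = v^2 h' z and h w h' = mu w, then iterating the braided commutator gives
     ad_c(z)^m(w) = sum_s (-(mu v^(m-1)))^s [m, s]_v z^(m-s) w z^s,
   the coefficient recursion being the q-Pascal rule.  For z = E_i, h = K_i and w = E_j take
   v = q_J^(d_i), mu = q_ij and m = 1 - a_ij: then mu v^(m-1) = p_ij, which is the Serre relation for
   the E's.  Moving the group-like L_i of x_i = F_i L_i to the right turns ad_c(x_i)^m(x_j) into a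
   nonzero scalar times ad_c(F_i)^m(F_j) times a group-like, where F_i is now twisted by K_i (this uses
   chi_i(L_j) = chi_j(K_i)); the expansion with v^-1 and mu = q_ij^-1 then gives the F-relations,
   because [m, s]_v is invariant under v -> v^-1.  Finally, multiplying the relation between x_i and y_j
   by the unit -chi_j(L_i)^-1 on the left and by L_i^-1 on the right yields the relation between E_j
   and F_i. *)

section \<open>Gaussian binomials\<close>

lemma gauss_binom_eq_0: "m < s \<Longrightarrow> gauss_binom v m s = 0"
  by (induction v m s rule: gauss_binom.induct) auto

lemma gauss_binom_0_right [simp]: "gauss_binom v m 0 = 1"
  by (cases m) auto

lemma gauss_binom_Suc_Suc:
  "gauss_binom v (Suc m) (Suc s) =
     v powi (int s + 1) * gauss_binom v m (Suc s) + v powi (int s - int m) * gauss_binom v m s"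
  by (simp add: add.commute)

lemma gauss_binom_1:
  fixes v :: "'k::field"
  assumes "v \<noteq> 0"
  shows "(v - inverse v) * gauss_binom v m 1 = v ^ m - inverse (v ^ m)"
proof (induction m)
  case (Suc m)
  have "(v - inverse v) * gauss_binom v (Suc m) 1
      = v * ((v - inverse v) * gauss_binom v m 1) + (v - inverse v) * inverse (v ^ m)"
    by (simp add: power_int_minus algebra_simps)
  also have "\<dots> = v ^ Suc m - inverse (v ^ Suc m)"
    unfolding Suc using assms by (simp add: field_simps)
  finally show ?case .
qed simp

lemma gauss_binom_absorption:
  fixes v :: "'k::field"
  assumes v: "v \<noteq> 0"
  shows "(v powi (int s + 1) - v powi (- (int s + 1))) * gauss_binom v m (Suc s)
       = (v powi (int m - int s) - v powi (int s - int m)) * gauss_binom v m s"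
proof (induction m arbitrary: s)
  case 0
  then show ?case by (cases s) auto
next
  case (Suc m)
  have powi_mult: "v powi i * v powi j = v powi (i + j)" for i j
    using v by (simp add: power_int_add)
  show ?case
  proof (cases s)
    case 0
    have "v powi (int (Suc m) - int 0) = v ^ Suc m"
      and "v powi (int 0 - int (Suc m)) = inverse (v ^ Suc m)"
      by (simp_all only: of_nat_0 diff_zero diff_0 power_int_of_nat power_int_minus)
    then show ?thesis
      using 0 gauss_binom_1[OF v, of "Suc m"] by (simp add: power_int_minus)
  next
    case (Suc t)
    define P X Y where "P = gauss_binom v m (t + 2)" and "X = gauss_binom v m (t + 1)"
      and "Y = gauss_binom v m t"
    have IH1: "(v powi (int t + 2) - v powi (- int t - 2)) * P
        = (v powi (int m - int t - 1) - v powi (int t + 1 - int m)) * X"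
      using Suc.IH[of "t + 1"] by (simp add: P_def X_def algebra_simps)
    have IH2: "(v powi (int t + 1) - v powi (- int t - 1)) * X
        = (v powi (int m - int t) - v powi (int t - int m)) * Y"
      using Suc.IH[of t] by (simp add: X_def Y_def)
    have "(v powi (int s + 1) - v powi (- (int s + 1))) * gauss_binom v (Suc m) (Suc s)
        = v powi (int t + 2) * ((v powi (int t + 2) - v powi (- int t - 2)) * P)
          + (v powi (int t + 2) - v powi (- int t - 2)) * v powi (int t + 1 - int m) * X"
      unfolding Suc gauss_binom_Suc_Suc by (simp add: P_def X_def algebra_simps)
    also have "\<dots> = (v powi (int m - int t) - v powi (int t - int m)) * v powi (int t + 1) * X
          + v powi (int t - int m) * ((v powi (int t + 1) - v powi (- int t - 1)) * X)"
      unfolding IH1 by (simp add: algebra_simps powi_mult) (simp add: minus_diff_commute)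
    also have "\<dots> = (v powi (int (Suc m) - int s) - v powi (int s - int (Suc m)))
          * gauss_binom v (Suc m) s"
      unfolding IH2 Suc gauss_binom_Suc_Suc by (simp add: X_def Y_def algebra_simps)
    finally show ?thesis .
  qed
qed

lemma gauss_binom_Suc_Suc':
  fixes v :: "'k::field"
  assumes "v \<noteq> 0"
  shows "gauss_binom v (Suc m) (Suc s) =
     v powi (- (int s + 1)) * gauss_binom v m (Suc s) + v powi (- (int s - int m)) * gauss_binom v m s"
  using gauss_binom_absorption[OF assms, of s m] by (simp add: gauss_binom_Suc_Suc algebra_simps)

lemma gauss_binom_inverse:
  fixes v :: "'k::field"
  assumes "v \<noteq> 0"
  shows "gauss_binom (inverse v) m s = gauss_binom v m s"
proof (induction m arbitrary: s)
  case (Suc m)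
  show ?case
  proof (cases s)
    case (Suc t)
    have "gauss_binom (inverse v) (Suc m) (Suc t)
        = inverse (v powi (int t + 1)) * gauss_binom v m (Suc t)
          + inverse (v powi (int t - int m)) * gauss_binom v m t"
      by (simp only: gauss_binom_Suc_Suc power_int_inverse Suc.IH)
    then show ?thesis
      unfolding Suc gauss_binom_Suc_Suc'[OF assms] by (simp only: power_int_minus)
  qed simp
qed simp

definition serre_coeff :: "'k::field \<Rightarrow> nat \<Rightarrow> nat \<Rightarrow> 'k" where
  "serre_coeff v m s = (- (v powi (int m - 1))) ^ s * gauss_binom v m s"

lemma serre_coeff_0_right [simp]: "serre_coeff v m 0 = 1"
  by (simp add: serre_coeff_def)

lemma serre_coeff_eq_0: "m < s \<Longrightarrow> serre_coeff v m s = 0"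
  by (simp add: serre_coeff_def gauss_binom_eq_0)

lemma serre_coeff_Suc_Suc:
  fixes v :: "'k::field"
  assumes v: "v \<noteq> 0"
  shows "serre_coeff v (Suc m) (Suc s)
    = (v ^ 2) ^ Suc s * serre_coeff v m (Suc s) - (v ^ 2) ^ s * serre_coeff v m s"
proof -
  have powi: "(v powi i) ^ k = v powi (i * int k)" "(v ^ 2) ^ k = v powi (2 * int k)" for i k
    using power_int_of_nat[of v "2 * k"] by (simp_all add: power_int_power' power_mult)
  have powi_mult: "v powi i * v powi j = v powi (i + j)" for i j
    using v by (simp add: power_int_add)
  define A B where "A = v powi int m" and "B = v powi (int m - 1)"
  have 1: "A ^ Suc s * v powi (int s + 1) = (v ^ 2) ^ Suc s * B ^ Suc s"
    unfolding A_def B_def powi powi_mult by (simp add: algebra_simps)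
  have 2: "A ^ Suc s * v powi (int s - int m) = (v ^ 2) ^ s * B ^ s"
    unfolding A_def B_def powi powi_mult by (simp add: algebra_simps)
  have "serre_coeff v (Suc m) (Suc s) = (-1) ^ Suc s *
      (A ^ Suc s * v powi (int s + 1) * gauss_binom v m (Suc s)
       + A ^ Suc s * v powi (int s - int m) * gauss_binom v m s)"
    unfolding serre_coeff_def gauss_binom_Suc_Suc
    by (simp add: A_def power_minus[of "v powi int m"] distrib_left mult.assoc del: power_int_of_nat)
  also have "\<dots> = (v ^ 2) ^ Suc s * serre_coeff v m (Suc s) - (v ^ 2) ^ s * serre_coeff v m s"
    unfolding 1 2 B_def serre_coeff_def power_minus[of "v powi (int m - 1)"] by (simp add: algebra_simps)
  finally show ?thesis .
qed

section \<open>Braided commutators in an algebra\<close>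

locale central_algebra =
  fixes sc :: "'k::field \<Rightarrow> 'a::ring_1"
  assumes k_algebra: "k_algebra sc"
begin

lemma sc_add: "sc (c + d) = sc c + sc d"
  using k_algebra unfolding k_algebra_def by (elim conjE allE)

lemma sc_mult: "sc (c * d) = sc c * sc d"
  using k_algebra unfolding k_algebra_def by (elim conjE allE)

lemma sc_1 [simp]: "sc 1 = 1"
  using k_algebra unfolding k_algebra_def by (elim conjE)

lemma sc_commute: "sc c * z = z * sc c"
  using k_algebra unfolding k_algebra_def by (elim conjE allE)

lemma sc_0 [simp]: "sc 0 = 0"
  using sc_add[of 0 0] by simp

lemma sc_minus: "sc (- c) = - sc c"
  using sc_add[of c "- c"] by (simp add: minus_unique[symmetric])

lemma sc_diff: "sc (c - d) = sc c - sc d"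
  using sc_add[of c "- d"] by (simp add: sc_minus)

(* Not usable as a simp rule: it loops when z is itself a scalar, hence the explicit instances below. *)
lemma mult_sc_left_commute: "z * (sc c * w) = sc c * (z * w)"
  by (simp only: mult.assoc[symmetric] sc_commute[of c z])

lemma sc_mult_sc: "sc c * (sc d * z) = sc (c * d) * z"
  by (simp add: sc_mult mult.assoc)

lemma power_mult_commute_sc:
  assumes "h * z = sc \<theta> * z * h"
  shows "h ^ s * z = sc (\<theta> ^ s) * z * h ^ s"
proof (induction s)
  case (Suc s)
  have "h ^ Suc s * z = h ^ s * (sc \<theta> * (z * h))"
    by (simp only: power_Suc2 mult.assoc assms)
  also have "\<dots> = sc \<theta> * (h ^ s * z * h)"
    by (simp only: mult_sc_left_commute mult.assoc)
  also have "\<dots> = sc \<theta> * (sc (\<theta> ^ s) * (z * h ^ s * h))"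
    by (simp only: Suc mult.assoc)
  also have "\<dots> = sc (\<theta> ^ Suc s) * z * h ^ Suc s"
    by (simp only: sc_mult_sc power_Suc power_Suc2 mult.assoc power_commutes)
  finally show ?case .
qed simp

lemma mult_power_commute_sc:
  assumes "z * h' = sc \<theta> * h' * z"
  shows "z * h' ^ s = sc (\<theta> ^ s) * h' ^ s * z"
proof (induction s)
  case (Suc s)
  have "z * h' ^ Suc s = z * h' * h' ^ s"
    by (simp only: power_Suc mult.assoc)
  also have "\<dots> = sc \<theta> * (h' * (z * h' ^ s))"
    by (simp only: assms mult.assoc)
  also have "\<dots> = sc \<theta> * (h' * (sc (\<theta> ^ s) * (h' ^ s * z)))"
    by (simp only: Suc mult.assoc)
  also have "\<dots> = sc \<theta> * (sc (\<theta> ^ s) * (h' * (h' ^ s * z)))"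
    by (simp only: mult_sc_left_commute[of h'])
  also have "\<dots> = sc (\<theta> ^ Suc s) * h' ^ Suc s * z"
    by (simp only: sc_mult_sc power_Suc mult.assoc)
  finally show ?case .
qed simp

lemma conj_power_sc:
  assumes "h * w * h' = sc \<mu> * w"
  shows "h ^ s * w * h' ^ s = sc (\<mu> ^ s) * w"
proof (induction s)
  case (Suc s)
  have "h ^ Suc s * w * h' ^ Suc s = h ^ s * (h * w * h') * h' ^ s"
    by (simp only: power_Suc2[of h s] power_Suc[of h' s] mult.assoc)
  also have "\<dots> = h ^ s * (sc \<mu> * w) * h' ^ s"
    by (simp only: assms)
  also have "\<dots> = sc \<mu> * (h ^ s * w * h' ^ s)"
    by (simp only: mult.assoc mult_sc_left_commute[of "h ^ s"])
  also have "\<dots> = sc (\<mu> ^ Suc s) * w"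
    by (simp only: Suc sc_mult_sc power_Suc)
  finally show ?case .
qed simp

lemma ad_c_sc: "ad_c h h' z (sc c * w) = sc c * ad_c h h' z w"
  by (simp only: ad_c_def mult_sc_left_commute mult.assoc right_diff_distrib)

lemma power_ad_c_power:
  assumes hz: "h * z = sc \<theta> * z * h" and zh': "z * h' = sc \<theta> * h' * z" and "s \<le> m"
  shows "z ^ (m - s) * h ^ s * ad_c h h' z w * h' ^ s * z ^ s
     = sc (\<theta> ^ s) * (z ^ (Suc m - s) * h ^ s * w * h' ^ s * z ^ s
                    - z ^ (m - s) * h ^ Suc s * w * h' ^ Suc s * z ^ Suc s)"
proof -
  have "z ^ (m - s) * h ^ s * (z * w) * h' ^ s * z ^ s
      = z ^ (m - s) * (h ^ s * z) * (w * h' ^ s * z ^ s)"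
    by (simp only: mult.assoc)
  also have "\<dots> = sc (\<theta> ^ s) * (z ^ (m - s) * z * h ^ s * w * h' ^ s * z ^ s)"
    by (simp only: power_mult_commute_sc[OF hz] mult.assoc mult_sc_left_commute)
  also have "z ^ (m - s) * z = z ^ (Suc m - s)"
    using \<open>s \<le> m\<close> by (simp add: Suc_diff_le power_Suc2 power_commutes)
  finally have first: "z ^ (m - s) * h ^ s * (z * w) * h' ^ s * z ^ s
      = sc (\<theta> ^ s) * (z ^ (Suc m - s) * h ^ s * w * h' ^ s * z ^ s)" .
  have "z ^ (m - s) * h ^ s * (h * w * h' * z) * h' ^ s * z ^ s
      = z ^ (m - s) * (h ^ s * h) * w * h' * (z * h' ^ s) * z ^ s"
    by (simp only: mult.assoc)
  also have "\<dots> = sc (\<theta> ^ s) * (z ^ (m - s) * h ^ Suc s * w * h' ^ Suc s * z ^ Suc s)"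
    by (simp only: mult_power_commute_sc[OF zh'] mult.assoc mult_sc_left_commute
        power_Suc2[of h s] power_Suc[of h' s] power_Suc[of z s])
  finally have second: "z ^ (m - s) * h ^ s * (h * w * h' * z) * h' ^ s * z ^ s
      = sc (\<theta> ^ s) * (z ^ (m - s) * h ^ Suc s * w * h' ^ Suc s * z ^ Suc s)" .
  show ?thesis
    unfolding ad_c_def right_diff_distrib left_diff_distrib first second ..
qed

lemma ad_c_iterate_eq_sum:
  assumes v: "v \<noteq> 0" and hz: "h * z = sc (v ^ 2) * z * h" and zh': "z * h' = sc (v ^ 2) * h' * z"
  shows "(ad_c h h' z ^^ m) w
    = (\<Sum>s\<le>m. sc (serre_coeff v m s) * (z ^ (m - s) * h ^ s * w * h' ^ s * z ^ s))"
proof (induction m arbitrary: w)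
  case (Suc m)
  define T where "T s = z ^ (Suc m - s) * h ^ s * w * h' ^ s * z ^ s" for s
  define c where "c s = sc ((v ^ 2) ^ s * serre_coeff v m s)" for s
  have "(ad_c h h' z ^^ Suc m) w
      = (\<Sum>s\<le>m. sc (serre_coeff v m s) * (z ^ (m - s) * h ^ s * ad_c h h' z w * h' ^ s * z ^ s))"
    by (simp only: funpow_Suc_right o_apply Suc.IH)
  also have "\<dots> = (\<Sum>s\<le>m. c s * T s - c s * T (Suc s))"
    by (intro sum.cong refl)
      (simp add: power_ad_c_power[OF hz zh'] T_def c_def sc_mult_sc right_diff_distrib mult.commute)
  also have "\<dots> = (\<Sum>s\<le>m. c s * T s) - (\<Sum>s\<le>m. c s * T (Suc s))"
    by (simp only: sum_subtractf)
  also have "(\<Sum>s\<le>m. c s * T s) = T 0 + (\<Sum>s\<le>m. c (Suc s) * T (Suc s))"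
  proof -
    have "c 0 = 1" and "c (Suc m) = 0"
      by (simp_all add: c_def serre_coeff_eq_0)
    then show ?thesis
      using sum.atMost_Suc_shift[of "\<lambda>s. c s * T s" m] sum.atMost_Suc[of "\<lambda>s. c s * T s" m]
      by simp
  qed
  also have "T 0 + (\<Sum>s\<le>m. c (Suc s) * T (Suc s)) - (\<Sum>s\<le>m. c s * T (Suc s))
      = T 0 + (\<Sum>s\<le>m. (c (Suc s) - c s) * T (Suc s))"
    by (simp add: sum_subtractf left_diff_distrib)
  also have "\<dots> = (\<Sum>s\<le>Suc m. sc (serre_coeff v (Suc m) s) * T s)"
    unfolding sum.atMost_Suc_shift by (simp add: c_def serre_coeff_Suc_Suc[OF v] sc_diff)
  finally show ?case
    by (simp add: T_def)
qed simp

theorem ad_c_iterate_eq_q_serre_sum: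
  assumes "v \<noteq> 0" and "h * z = sc (v ^ 2) * z * h" and "z * h' = sc (v ^ 2) * h' * z"
    and hw: "h * w * h' = sc \<mu> * w"
  shows "(ad_c h h' z ^^ m) w = (\<Sum>s = 0..m.
    sc ((- (\<mu> * v powi (int m - 1))) ^ s * gauss_binom v m s) * z ^ (m - s) * w * z ^ s)"
proof -
  have "sc (serre_coeff v m s) * (z ^ (m - s) * h ^ s * w * h' ^ s * z ^ s)
      = sc ((- (\<mu> * v powi (int m - 1))) ^ s * gauss_binom v m s) * z ^ (m - s) * w * z ^ s" for s
  proof -
    have "z ^ (m - s) * h ^ s * w * h' ^ s * z ^ s = z ^ (m - s) * (h ^ s * w * h' ^ s) * z ^ s"
      by (simp only: mult.assoc)
    also have "\<dots> = sc (\<mu> ^ s) * (z ^ (m - s) * w * z ^ s)"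
      unfolding conj_power_sc[OF hw] by (simp only: mult.assoc mult_sc_left_commute)
    finally have "sc (serre_coeff v m s) * (z ^ (m - s) * h ^ s * w * h' ^ s * z ^ s)
        = sc (serre_coeff v m s) * (sc (\<mu> ^ s) * (z ^ (m - s) * w * z ^ s))"
      by (rule arg_cong)
    moreover have "(- (\<mu> * v powi (int m - 1))) ^ s = \<mu> ^ s * (- (v powi (int m - 1))) ^ s"
      by (simp only: power_mult_distrib flip: mult_minus_right)
    ultimately show ?thesis
      by (simp add: sc_mult_sc serre_coeff_def mult_ac)
  qed
  then show ?thesis
    by (simp add: ad_c_iterate_eq_sum[OF assms(1-3)] atLeast0AtMost)
qed

end

section \<open>Group-like elements and weight vectors\<close>

locale group_like_algebra = central_algebra sc for sc :: "'k::field \<Rightarrow> 'a::ring_1" +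
  fixes \<gamma> :: "'g::ab_group_add \<Rightarrow> 'a"
  assumes group_into: "group_into \<gamma>"
begin

lemma \<gamma>_add: "\<gamma> (g + h) = \<gamma> g * \<gamma> h"
  using group_into unfolding group_into_def by (elim conjE allE)

lemma \<gamma>_0 [simp]: "\<gamma> 0 = 1"
  using group_into unfolding group_into_def by (elim conjE)

lemma \<gamma>_right_inverse [simp]: "\<gamma> g * \<gamma> (- g) = 1"
  by (simp flip: \<gamma>_add)

lemma \<gamma>_left_inverse [simp]: "\<gamma> (- g) * \<gamma> g = 1"
  by (simp flip: \<gamma>_add)

lemma \<gamma>_commute: "\<gamma> g * \<gamma> h = \<gamma> h * \<gamma> g"
  by (simp only: add.commute flip: \<gamma>_add)

lemma \<gamma>_left_commute: "\<gamma> g * (\<gamma> h * u) = \<gamma> h * (\<gamma> g * u)"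
  by (simp only: \<gamma>_commute[of g h] flip: mult.assoc)

lemma sc_mult_\<gamma>_cancel:
  assumes "c \<noteq> 0"
  shows "sc c * u * \<gamma> g = sc c * u' * \<gamma> g \<longleftrightarrow> u = u'"
proof
  assume "sc c * u * \<gamma> g = sc c * u' * \<gamma> g"
  then have "sc (inverse c) * (sc c * u * \<gamma> g) * \<gamma> (- g)
      = sc (inverse c) * (sc c * u' * \<gamma> g) * \<gamma> (- g)"
    by simp
  then show "u = u'"
    using assms by (simp add: sc_mult_sc mult.assoc)
qed simp

definition has_weight :: "('g \<Rightarrow> 'k) \<Rightarrow> 'a \<Rightarrow> bool" where
  "has_weight \<psi> u \<longleftrightarrow> (\<forall>g. \<gamma> g * u * \<gamma> (- g) = sc (\<psi> g) * u)"

lemma has_weightD: "has_weight \<psi> u \<Longrightarrow> \<gamma> g * u * \<gamma> (- g) = sc (\<psi> g) * u"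
  by (simp add: has_weight_def)

lemma has_weight_commute:
  assumes "has_weight \<psi> u"
  shows "\<gamma> g * u = sc (\<psi> g) * u * \<gamma> g"
proof -
  have "\<gamma> g * u = \<gamma> g * u * (\<gamma> (- g) * \<gamma> g)"
    by simp
  also have "\<dots> = sc (\<psi> g) * u * \<gamma> g"
    by (simp only: has_weightD[OF assms] flip: mult.assoc)
  finally show ?thesis .
qed

lemma has_weight_commute':
  assumes "has_weight \<psi> u"
  shows "u * \<gamma> (- g) = sc (\<psi> g) * \<gamma> (- g) * u"
proof -
  have "u * \<gamma> (- g) = \<gamma> (- g) * (\<gamma> g * u * \<gamma> (- g))"
    by (simp flip: mult.assoc)
  also have "\<dots> = sc (\<psi> g) * \<gamma> (- g) * u"
    unfolding has_weightD[OF assms] by (simp only: mult_sc_left_commute mult.assoc)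
  finally show ?thesis .
qed

lemma has_weight_mult_\<gamma>:
  assumes "has_weight \<psi> u"
  shows "has_weight \<psi> (u * \<gamma> h)"
  unfolding has_weight_def
proof
  fix g
  have "\<gamma> g * (u * \<gamma> h) * \<gamma> (- g) = \<gamma> g * u * \<gamma> (- g) * \<gamma> h"
    by (simp only: mult.assoc \<gamma>_commute[of h "- g"])
  also have "\<dots> = sc (\<psi> g) * (u * \<gamma> h)"
    unfolding has_weightD[OF assms] by (simp only: mult.assoc)
  finally show "\<gamma> g * (u * \<gamma> h) * \<gamma> (- g) = sc (\<psi> g) * (u * \<gamma> h)" .
qed

lemma \<gamma>_conj_mult:
  "\<gamma> g * (u * w) * \<gamma> (- g) = (\<gamma> g * u * \<gamma> (- g)) * (\<gamma> g * w * \<gamma> (- g))"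
proof -
  have "(\<gamma> g * u * \<gamma> (- g)) * (\<gamma> g * w * \<gamma> (- g))
      = \<gamma> g * u * (\<gamma> (- g) * \<gamma> g) * w * \<gamma> (- g)"
    by (simp only: mult.assoc)
  then show ?thesis
    by (simp add: mult.assoc)
qed

lemma has_weight_ad_c:
  assumes z: "has_weight \<alpha> z" and w: "has_weight \<beta> w"
  shows "has_weight (\<lambda>g. \<alpha> g * \<beta> g) (ad_c (\<gamma> K) (\<gamma> (- K)) z w)"
  unfolding has_weight_def
proof
  fix g
  have ad: "ad_c (\<gamma> K) (\<gamma> (- K)) z w = z * w - sc (\<beta> K) * (w * z)"
    unfolding ad_c_def has_weightD[OF w] by (simp only: mult.assoc)
  have "\<gamma> g * (z * w - sc (\<beta> K) * (w * z)) * \<gamma> (- g)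
      = \<gamma> g * (z * w) * \<gamma> (- g) - sc (\<beta> K) * (\<gamma> g * (w * z) * \<gamma> (- g))"
    by (simp only: right_diff_distrib left_diff_distrib mult_sc_left_commute[of "\<gamma> g"] mult.assoc)
  also have "\<dots> = sc (\<alpha> g * \<beta> g) * (z * w - sc (\<beta> K) * (w * z))"
    unfolding \<gamma>_conj_mult has_weightD[OF z] has_weightD[OF w]
    by (simp add: mult_sc_left_commute[of z] mult_sc_left_commute[of w] sc_mult_sc
        right_diff_distrib mult_ac)
  finally show "\<gamma> g * ad_c (\<gamma> K) (\<gamma> (- K)) z w * \<gamma> (- g)
      = sc (\<alpha> g * \<beta> g) * ad_c (\<gamma> K) (\<gamma> (- K)) z w"
    by (simp only: ad)
qed

lemma has_weight_ad_c_iterate: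
  assumes "has_weight \<alpha> z" and "has_weight \<beta> w"
  shows "has_weight (\<lambda>g. \<alpha> g ^ k * \<beta> g) ((ad_c (\<gamma> K) (\<gamma> (- K)) z ^^ k) w)"
proof (induction k)
  case (Suc k)
  then show ?case
    using has_weight_ad_c[OF assms(1) Suc] by (simp add: mult.assoc)
qed (simp add: assms(2))

lemma ad_c_mult_\<gamma>:
  assumes F: "\<gamma> G * F = sc c * F * \<gamma> G"
    and WL: "\<gamma> L * W * \<gamma> (- L) = sc b * W" and WK: "\<gamma> K * W * \<gamma> (- K) = sc c * W"
  shows "ad_c (\<gamma> L) (\<gamma> (- L)) (F * \<gamma> L) (W * \<gamma> G)
    = sc b * (ad_c (\<gamma> K) (\<gamma> (- K)) F W * \<gamma> (G + L))"
proof -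
  have W: "\<gamma> L * W = sc b * W * \<gamma> L"
    using WL by (metis \<gamma>_left_inverse mult.assoc mult_1_right)
  have GL: "\<gamma> (G + L) = \<gamma> G * \<gamma> L"
    by (rule \<gamma>_add)
  have "F * \<gamma> L * (W * \<gamma> G) = F * (\<gamma> L * W) * \<gamma> G"
    by (simp only: mult.assoc)
  also have "\<dots> = sc b * (F * W * \<gamma> (G + L))"
    unfolding W GL by (simp only: mult.assoc mult_sc_left_commute \<gamma>_commute[of L G])
  finally have first: "F * \<gamma> L * (W * \<gamma> G) = sc b * (F * W * \<gamma> (G + L))" .
  have "\<gamma> L * (W * \<gamma> G) * \<gamma> (- L) * (F * \<gamma> L)
      = \<gamma> L * W * \<gamma> (- L) * (\<gamma> G * F) * \<gamma> L"
    by (simp only: mult.assoc \<gamma>_left_commute[of G "- L"])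
  also have "\<dots> = sc b * (sc c * W * F * \<gamma> (G + L))"
    unfolding WL F GL by (simp only: mult.assoc mult_sc_left_commute[of W])
  finally have second:
    "\<gamma> L * (W * \<gamma> G) * \<gamma> (- L) * (F * \<gamma> L) = sc b * (sc c * W * F * \<gamma> (G + L))" .
  show ?thesis
    unfolding ad_c_def WK first second by (simp only: right_diff_distrib left_diff_distrib mult.assoc)
qed

end

section \<open>The reduced datum\<close>

locale smash_datum =
  fixes n :: nat and L K :: "nat \<Rightarrow> 'g::ab_group_add" and \<chi> :: "nat \<Rightarrow> 'g \<Rightarrow> 'k::field"
    and a :: "nat \<Rightarrow> nat \<Rightarrow> int" and sc :: "'k \<Rightarrow> 'a::ring_1" and \<gamma> :: "'g \<Rightarrow> 'a"
    and x y F :: "nat \<Rightarrow> 'a"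
  assumes reduced_datum: "reduced_datum n L K \<chi> a"
    and smash_relations: "smash_relations n \<chi> sc \<gamma> x y"
    and F_eq: "F i = x i * \<gamma> (- L i)"

sublocale smash_datum \<subseteq> group_like_algebra sc \<gamma>
  using smash_relations unfolding smash_relations_def by unfold_locales simp_all

context smash_datum
begin

lemma is_character_\<chi>: "i < n \<Longrightarrow> is_character (\<chi> i)"
  using reduced_datum unfolding reduced_datum_def by simp

lemma \<chi>_add: "i < n \<Longrightarrow> \<chi> i (g + h) = \<chi> i g * \<chi> i h"
  using is_character_\<chi> unfolding is_character_def by simp

lemma \<chi>_minus: "i < n \<Longrightarrow> \<chi> i (- g) * \<chi> i g = 1"
  using is_character_\<chi> \<chi>_add[of i "- g" g] unfolding is_character_def by simp

lemma \<chi>_nonzero: "i < n \<Longrightarrow> \<chi> i g \<noteq> 0"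
  using \<chi>_minus[of i g] by auto

lemma \<chi>_minus_inverse: "i < n \<Longrightarrow> \<chi> i (- g) = inverse (\<chi> i g)"
  using \<chi>_minus[of i g] \<chi>_nonzero[of i g] by (simp add: field_simps)

lemma \<chi>_L: "i < n \<Longrightarrow> j < n \<Longrightarrow> \<chi> i (L j) = \<chi> j (K i)"
  using reduced_datum unfolding reduced_datum_def by simp

lemma cartan_offdiag_nonpos: "i < n \<Longrightarrow> j < n \<Longrightarrow> i \<noteq> j \<Longrightarrow> a i j \<le> 0"
  using reduced_datum unfolding reduced_datum_def cartan_finite_type_def gen_cartan_def by simp

lemma cartan_eq_0_if_not_same_component:
  assumes "i < n" "j < n" "i \<noteq> j" "\<not> same_component n a i j"
  shows "a i j = 0"
proof (rule ccontr)
  assume "a i j \<noteq> 0"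
  then have "dynkin_adj n a i j"
    using assms by (simp add: dynkin_adj_def)
  then show False
    using assms(4) unfolding same_component_def by (simp add: r_into_rtranclp)
qed

lemma y_weight: "i < n \<Longrightarrow> has_weight (\<chi> i) (y i)"
  using smash_relations unfolding smash_relations_def has_weight_def by simp

lemma x_weight: "i < n \<Longrightarrow> has_weight (\<lambda>g. inverse (\<chi> i g)) (x i)"
  using smash_relations unfolding smash_relations_def has_weight_def by simp

lemma F_weight: "i < n \<Longrightarrow> has_weight (\<lambda>g. inverse (\<chi> i g)) (F i)"
  unfolding F_eq by (rule has_weight_mult_\<gamma>[OF x_weight])

lemma x_eq_F: "x i = F i * \<gamma> (L i)"
  by (simp add: F_eq mult.assoc)

lemma ad_x_iterate_eq_scaled_ad_F_iterate:
  assumes i: "i < n" and j: "j < n"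
  shows "\<exists>c G. c \<noteq> 0 \<and> \<chi> i G = \<chi> i (K i) ^ k * \<chi> j (K i)
    \<and> (ad_c (\<gamma> (L i)) (\<gamma> (- L i)) (x i) ^^ k) (x j)
      = sc c * (ad_c (\<gamma> (K i)) (\<gamma> (- K i)) (F i) ^^ k) (F j) * \<gamma> G"
proof (induction k)
  case 0
  show ?case
    by (intro exI[of _ 1] exI[of _ "L j"]) (simp add: \<chi>_L i j x_eq_F)
next
  case (Suc k)
  define W where "W = (ad_c (\<gamma> (K i)) (\<gamma> (- K i)) (F i) ^^ k) (F j)"
  define \<psi> where "\<psi> g = inverse (\<chi> i g) ^ k * inverse (\<chi> j g)" for g
  from Suc.IH obtain c G where c: "c \<noteq> 0" and G: "\<chi> i G = \<chi> i (K i) ^ k * \<chi> j (K i)"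
    and IH: "(ad_c (\<gamma> (L i)) (\<gamma> (- L i)) (x i) ^^ k) (x j) = sc c * W * \<gamma> G"
    unfolding W_def by blast
  have W: "has_weight \<psi> W"
    unfolding W_def \<psi>_def by (rule has_weight_ad_c_iterate[OF F_weight[OF i] F_weight[OF j]])
  have "\<psi> (K i) = inverse (\<chi> i G)"
    by (simp add: \<psi>_def G power_inverse)
  then have WK: "\<gamma> (K i) * W * \<gamma> (- K i) = sc (inverse (\<chi> i G)) * W"
    using has_weightD[OF W] by simp
  have step: "ad_c (\<gamma> (L i)) (\<gamma> (- L i)) (x i) (W * \<gamma> G)
      = sc (\<psi> (L i)) * (ad_c (\<gamma> (K i)) (\<gamma> (- K i)) (F i) W * \<gamma> (G + L i))"
    unfolding x_eq_F
    by (rule ad_c_mult_\<gamma>[OF has_weight_commute[OF F_weight[OF i]] has_weightD[OF W] WK])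
  show ?case
  proof (intro exI conjI)
    show "c * \<psi> (L i) \<noteq> 0"
      using c by (simp add: \<psi>_def \<chi>_nonzero i j)
    show "\<chi> i (G + L i) = \<chi> i (K i) ^ Suc k * \<chi> j (K i)"
      by (simp add: \<chi>_add i G \<chi>_L)
    show "(ad_c (\<gamma> (L i)) (\<gamma> (- L i)) (x i) ^^ Suc k) (x j)
      = sc (c * \<psi> (L i)) * (ad_c (\<gamma> (K i)) (\<gamma> (- K i)) (F i) ^^ Suc k) (F j) * \<gamma> (G + L i)"
    proof -
      have "(ad_c (\<gamma> (L i)) (\<gamma> (- L i)) (x i) ^^ Suc k) (x j)
          = sc c * ad_c (\<gamma> (L i)) (\<gamma> (- L i)) (x i) (W * \<gamma> G)"
        by (simp add: IH ad_c_sc mult.assoc)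
      then show ?thesis
        unfolding step by (simp add: W_def sc_mult_sc mult.assoc)
    qed
  qed
qed

lemma ad_x_iterate_eq_0_iff_ad_F_iterate_eq_0:
  assumes "i < n" "j < n"
  shows "(ad_c (\<gamma> (L i)) (\<gamma> (- L i)) (x i) ^^ k) (x j) = 0
    \<longleftrightarrow> (ad_c (\<gamma> (K i)) (\<gamma> (- K i)) (F i) ^^ k) (F j) = 0"
proof -
  obtain c G where "c \<noteq> 0" and "(ad_c (\<gamma> (L i)) (\<gamma> (- L i)) (x i) ^^ k) (x j)
      = sc c * (ad_c (\<gamma> (K i)) (\<gamma> (- K i)) (F i) ^^ k) (F j) * \<gamma> G"
    using ad_x_iterate_eq_scaled_ad_F_iterate[OF assms] by blast
  then show ?thesis
    using sc_mult_\<gamma>_cancel[of c _ G 0] by simp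
qed

lemma pcoef_eq:
  assumes "i < n" "j < n" "i \<noteq> j"
  shows "pcoef n a K \<chi> d qc i j = qpar K \<chi> i j * (qc i ^ d i) powi (int (nat (1 - a i j)) - 1)"
proof (cases "same_component n a i j")
  case True
  have "int (nat (1 - a i j)) - 1 = - a i j"
    using cartan_offdiag_nonpos[OF assms] by simp
  then show ?thesis
    using True by (simp add: pcoef_def power_int_power)
next
  case False
  then show ?thesis
    using cartan_eq_0_if_not_same_component[OF assms] by (simp add: pcoef_def)
qed

lemma ad_y_iterate_eq_q_serre_sum:
  assumes "i < n" "j < n" "i \<noteq> j" and qii: "qpar K \<chi> i i = qc i ^ (2 * d i)"
  shows "(ad_c (\<gamma> (K i)) (\<gamma> (- K i)) (y i) ^^ nat (1 - a i j)) (y j) = (\<Sum>s = 0..nat (1 - a i j).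
    sc ((- pcoef n a K \<chi> d qc i j) ^ s * gauss_binom (qc i ^ d i) (nat (1 - a i j)) s)
      * y i ^ (nat (1 - a i j) - s) * y j * y i ^ s)"
proof -
  define v where "v = qc i ^ d i"
  have v2: "v ^ 2 = \<chi> i (K i)"
    using qii by (simp add: v_def qpar_def mult.commute flip: power_mult)
  then have v: "v \<noteq> 0"
    using \<chi>_nonzero[OF assms(1)] by auto
  have hz: "\<gamma> (K i) * y i = sc (v ^ 2) * y i * \<gamma> (K i)"
    and zh: "y i * \<gamma> (- K i) = sc (v ^ 2) * \<gamma> (- K i) * y i"
    unfolding v2 by (rule has_weight_commute has_weight_commute', rule y_weight[OF assms(1)])+
  show ?thesis
    unfolding pcoef_eq[OF assms(1-3)] v_def[symmetric] qpar_def
    by (rule ad_c_iterate_eq_q_serre_sum[OF v hz zh has_weightD[OF y_weight[OF assms(2)]]])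
qed

lemma ad_F_iterate_eq_q_serre_sum:
  assumes "i < n" "j < n" "i \<noteq> j" and qii: "qpar K \<chi> i i = qc i ^ (2 * d i)"
  shows "(ad_c (\<gamma> (K i)) (\<gamma> (- K i)) (F i) ^^ nat (1 - a i j)) (F j) = (\<Sum>s = 0..nat (1 - a i j).
    sc ((- inverse (pcoef n a K \<chi> d qc i j)) ^ s * gauss_binom (qc i ^ d i) (nat (1 - a i j)) s)
      * F i ^ (nat (1 - a i j) - s) * F j * F i ^ s)"
proof -
  define v where "v = qc i ^ d i"
  have v2: "inverse v ^ 2 = inverse (\<chi> i (K i))"
    using qii by (simp add: v_def qpar_def mult.commute power_inverse flip: power_mult)
  then have v: "v \<noteq> 0"
    using \<chi>_nonzero[OF assms(1)] by auto
  have hz: "\<gamma> (K i) * F i = sc (inverse v ^ 2) * F i * \<gamma> (K i)"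
    and zh: "F i * \<gamma> (- K i) = sc (inverse v ^ 2) * \<gamma> (- K i) * F i"
    unfolding v2 by (rule has_weight_commute has_weight_commute', rule F_weight[OF assms(1)])+
  have "inverse (pcoef n a K \<chi> d qc i j)
      = inverse (\<chi> j (K i)) * inverse v powi (int (nat (1 - a i j)) - 1)"
    by (simp add: pcoef_eq[OF assms(1-3)] v_def qpar_def power_int_inverse del: power_int_of_nat)
  then show ?thesis
    unfolding v_def[symmetric] gauss_binom_inverse[OF v, symmetric]
    using ad_c_iterate_eq_q_serre_sum[OF _ hz zh has_weightD[OF F_weight[OF assms(2)]]] v
    by simp
qed

lemma commutation_relation_iff:
  assumes "i < n" "j < n"
  shows "x i * y j - sc (\<chi> j (L i)) * y j * x i = (if i = j then sc (l i) * (1 - \<gamma> (K i + L i)) else 0)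
    \<longleftrightarrow> y j * F i - F i * y j
      = (if j = i then sc (inverse (qpar K \<chi> j j) * l j) * (\<gamma> (K j) - \<gamma> (- L j)) else 0)"
proof -
  define r where "r = inverse (\<chi> j (L i))"
  have r: "- r \<noteq> 0"
    using \<chi>_nonzero[OF assms(2)] by (simp add: r_def)
  have "F i * y j = x i * (\<gamma> (- L i) * y j)"
    by (simp add: F_eq mult.assoc)
  also have "\<dots> = sc r * (x i * y j * \<gamma> (- L i))"
    unfolding has_weight_commute[OF y_weight[OF assms(2)]]
    by (simp add: \<chi>_minus_inverse[OF assms(2)] r_def mult_sc_left_commute mult.assoc)
  finally have "y j * F i - F i * y j
      = sc (- r) * (x i * y j - sc (\<chi> j (L i)) * y j * x i) * \<gamma> (- L i)"
    using \<chi>_nonzero[OF assms(2)]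
    by (simp add: F_eq r_def sc_minus sc_mult_sc right_diff_distrib left_diff_distrib mult.assoc)
  moreover have "(if j = i then sc (inverse (qpar K \<chi> j j) * l j) * (\<gamma> (K j) - \<gamma> (- L j)) else 0)
      = sc (- r) * (if i = j then sc (l i) * (1 - \<gamma> (K i + L i)) else 0) * \<gamma> (- L i)"
    using assms
    by (simp add: r_def qpar_def \<chi>_L sc_minus sc_mult_sc \<gamma>_add right_diff_distrib left_diff_distrib
        mult.assoc)
  ultimately show ?thesis
    by (simp only: sc_mult_\<gamma>_cancel[OF r])
qed

theorem U_relations_iff_new_relations:
  assumes "\<forall>i<n. qpar K \<chi> i i = qc i ^ (2 * d i)"
  shows "U_relations n L K \<chi> a l sc \<gamma> x y \<longleftrightarrow> new_relations n L K \<chi> a l d qc sc \<gamma> y F"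
  unfolding U_relations_def new_relations_def
  using ad_y_iterate_eq_q_serre_sum ad_F_iterate_eq_q_serre_sum
    ad_x_iterate_eq_0_iff_ad_F_iterate_eq_0 commutation_relation_iff assms
  by (auto simp del: power_int_of_nat)

end

lemma skew_primitive_mult_inverse:
  assumes "k_alg_hom sc scB \<iota>1" "k_alg_hom sc scB \<iota>2" "k_alg_hom sc scB \<Delta>"
    and "\<forall>u v. \<iota>1 u * \<iota>2 v = \<iota>2 v * \<iota>1 u"
    and "g * g' = 1" and "\<Delta> g' = \<iota>1 g' * \<iota>2 g'" and "\<Delta> u = \<iota>1 g * \<iota>2 u + \<iota>1 u"
  shows "\<Delta> (u * g') = \<iota>2 (u * g') + \<iota>1 (u * g') * \<iota>2 g'"
proof -
  have mult: "\<iota>1 (v * w) = \<iota>1 v * \<iota>1 w" "\<iota>2 (v * w) = \<iota>2 v * \<iota>2 w" "\<Delta> (v * w) = \<Delta> v * \<Delta> w"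
    and "\<iota>1 1 = 1" for v w
    using assms(1-3) by (simp_all add: k_alg_hom_def)
  have "\<Delta> (u * g') = \<iota>1 g * (\<iota>2 u * \<iota>1 g') * \<iota>2 g' + \<iota>1 u * \<iota>1 g' * \<iota>2 g'"
    by (simp only: mult assms(6,7) distrib_right mult.assoc)
  also have "\<dots> = \<iota>1 (g * g') * \<iota>2 (u * g') + \<iota>1 (u * g') * \<iota>2 g'"
    by (simp only: assms(4)[rule_format, of g' u, symmetric] mult mult.assoc)
  finally show ?thesis
    by (simp only: assms(5) \<open>\<iota>1 1 = 1\<close> mult_1_left)
qed

theorem lemma3p13:
  fixes n :: nat and L K :: "nat \<Rightarrow> 'g::ab_group_add" and \<chi> :: "nat \<Rightarrow> 'g \<Rightarrow> 'k::field_char_0"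
    and a :: "nat \<Rightarrow> nat \<Rightarrow> int" and l :: "nat \<Rightarrow> 'k"
    and d :: "nat \<Rightarrow> nat" and qc :: "nat \<Rightarrow> 'k"
    and sc :: "'k \<Rightarrow> 'a::ring_1" and \<gamma> :: "'g \<Rightarrow> 'a" and x y :: "nat \<Rightarrow> 'a"
  assumes "alg_closed TYPE('k)"
    and "reduced_datum n L K \<chi> a"
    and "\<forall>i<n. l i \<noteq> 0"
    and "\<forall>i<n. d i \<in> {1, 2, 3}"
    and "\<forall>i<n. \<forall>j<n. same_component n a i j \<longrightarrow> qc i = qc j"
    and "\<forall>i<n. qpar K \<chi> i i = qc i ^ (2 * d i)"
    and "\<forall>i<n. \<forall>j<n. same_component n a i j \<longrightarrow> int (d i) * a i j = int (d j) * a j i"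
    and "smash_relations n \<chi> sc \<gamma> x y"
  defines "E \<equiv> y" and "F \<equiv> (\<lambda>i. x i * \<gamma> (- L i))"
  shows "(U_relations n L K \<chi> a l sc \<gamma> x y \<longleftrightarrow> new_relations n L K \<chi> a l d qc sc \<gamma> E F)
    \<and> (\<forall>i<n. \<forall>g. \<gamma> g * E i * \<gamma> (- g) = sc (\<chi> i g) * E i
               \<and> \<gamma> g * F i * \<gamma> (- g) = sc (inverse (\<chi> i g)) * F i)
    \<and> (\<forall>(scB :: 'k \<Rightarrow> 'b::ring_1) \<iota>1 \<iota>2 \<Delta>.
         k_algebra scB \<and> k_alg_hom sc scB \<iota>1 \<and> k_alg_hom sc scB \<iota>2
         \<and> (\<forall>u v. \<iota>1 u * \<iota>2 v = \<iota>2 v * \<iota>1 u)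
         \<and> k_alg_hom sc scB \<Delta>
         \<and> (\<forall>g. \<Delta> (\<gamma> g) = \<iota>1 (\<gamma> g) * \<iota>2 (\<gamma> g))
         \<and> (\<forall>i<n. \<Delta> (x i) = \<iota>1 (\<gamma> (L i)) * \<iota>2 (x i) + \<iota>1 (x i)
                 \<and> \<Delta> (y i) = \<iota>1 (\<gamma> (K i)) * \<iota>2 (y i) + \<iota>1 (y i))
         \<longrightarrow> (\<forall>i<n. \<Delta> (E i) = \<iota>1 (\<gamma> (K i)) * \<iota>2 (E i) + \<iota>1 (E i)
                 \<and> \<Delta> (F i) = \<iota>2 (F i) + \<iota>1 (F i) * \<iota>2 (\<gamma> (- L i))))"
proof -
  interpret smash_datum n L K \<chi> a sc \<gamma> x y F
    using assms(2,8) by unfold_locales (simp_all add: F_def)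
  show ?thesis
  proof (intro conjI allI impI, goal_cases)
    case 1
    show ?case
      unfolding E_def by (rule U_relations_iff_new_relations[OF assms(6)])
  next
    case (2 i g)
    then show ?case
      unfolding E_def by (rule has_weightD[OF y_weight])
  next
    case (3 i g)
    then show ?case
      by (rule has_weightD[OF F_weight])
  next
    case (4 scB \<iota>1 \<iota>2 \<Delta> i)
    then show ?case
      unfolding E_def by meson
  next
    case (5 scB \<iota>1 \<iota>2 \<Delta> i)
    then show ?case
      unfolding F_def by (meson skew_primitive_mult_inverse \<gamma>_right_inverse)
  qed
qed

end
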